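(* Let $\Phi=(V,C)$ be a CNF formula and $\theta\ge0$. Introduce new variables $U=\{u_c: c\in C\}$ and the CNF formula $\Phi'=(V\cup U,C')$ with $C'=\{u_c\lor c: c\in C\}$. Let $\mathcal P$ be the product distribution on $\{0,1\}^{V\cup U}$ in which each $v\in V$ is uniform on $\{0,1\}$ and each $u\in U$ equals $1$ with probability $\exp(-\theta)$ and $0$ with probability $1-\exp(-\theta)$. For $c'\in C'$ let $\mathcal B_{c'}$ be the event that $c'$ is not satisfied. Then for every $X\in\{0,1\}^V$, $$\Pr_{\mathcal P}\Big[\text{each } v\in V \text{ takes the value } X(v)\ \Big|\ \bigwedge_{c'\in C'}\overline{\mathcal B_{c'}}\Big]=\mu_\theta(X),$$ where $\mu_\theta(X)=\frac{\exp(-\theta|F(X)|)}{\sum_{Y\in\{0,1\}^V}\exp(-\theta|F(Y)|)}$ and $F(X)\subseteq C$ is the set of clauses of $\Phi$ not satisfied by $X$.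
   Context: The clause $u_c\lor c$ is satisfied by an assignment if $u_c=1$ or the clause $c$ is satisfied. *)

theory Defs
  imports "HOL-Probability.Probability"
begin

type_synonym 'v clause = "('v \<times> bool) set"

definition cnf_formula :: "'v set \<Rightarrow> 'v clause set \<Rightarrow> bool" where
  "cnf_formula V C \<longleftrightarrow> finite V \<and> finite C \<and>
     (\<forall>c\<in>C. finite c \<and> fst ` c \<subseteq> V)"

definition clause_sat :: "('v \<Rightarrow> bool) \<Rightarrow> 'v clause \<Rightarrow> bool" where
  "clause_sat X c \<longleftrightarrow> (\<exists>(v, b)\<in>c. X v = b)"

definition unsat_clauses :: "'v clause set \<Rightarrow> ('v \<Rightarrow> bool) \<Rightarrow> 'v clause set" where
  "unsat_clauses C X = {c \<in> C. \<not> clause_sat X c}"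

definition mu_theta :: "'v set \<Rightarrow> 'v clause set \<Rightarrow> real \<Rightarrow> ('v \<Rightarrow> bool) \<Rightarrow> real" where
  "mu_theta V C \<theta> X =
     exp (- \<theta> * real (card (unsat_clauses C X))) /
     (\<Sum>Y\<in>V \<rightarrow>\<^sub>E (UNIV :: bool set). exp (- \<theta> * real (card (unsat_clauses C Y))))"

text \<open>The new formula Phi' over variables V \<union> U, where u_c is represented by Inr c
  and the original variable v by Inl v. The clause u_c \<or> c.\<close>
definition ext_clause :: "'v clause \<Rightarrow> ('v + 'v clause) clause" where
  "ext_clause c = insert (Inr c, True) ((\<lambda>(v, b). (Inl v, b)) ` c)"

definition ext_vars :: "'v set \<Rightarrow> 'v clause set \<Rightarrow> ('v + 'v clause) set" where
  "ext_vars V C = Inl ` V \<union> Inr ` C"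

definition ext_clauses :: "'v clause set \<Rightarrow> ('v + 'v clause) clause set" where
  "ext_clauses C = ext_clause ` C"

text \<open>The product distribution P on {0,1}^(V \<union> U) (True = 1); outside V \<union> U
  assignments are fixed to False.\<close>
definition prod_dist :: "'v set \<Rightarrow> 'v clause set \<Rightarrow> real \<Rightarrow> (('v + 'v clause) \<Rightarrow> bool) pmf" where
  "prod_dist V C \<theta> = Pi_pmf (ext_vars V C) False
     (\<lambda>x. case x of Inl v \<Rightarrow> bernoulli_pmf (1/2) | Inr c \<Rightarrow> bernoulli_pmf (exp (- \<theta>)))"

end

theory Submission
  imports Defs
begin

text \<open>Given \<open>X\<close> on \<open>V\<close>, the clause \<open>u\<^sub>c \<or> c\<close> forces \<open>u\<^sub>c = 1\<close> exactly when \<open>c \<in> F(X)\<close>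
  and leaves \<open>u\<^sub>c\<close> free otherwise. As the coordinates of \<open>\<P>\<close> are independent, the event
  "\<open>X\<close> on \<open>V\<close> and \<open>\<Phi>'\<close> satisfied" is a product set of probability \<open>2 ^ (-|V|) * exp(-\<theta> |F(X)|)\<close>.
  Summing over all \<open>X\<close> gives the probability that \<open>\<Phi>'\<close> is satisfied, and the factor
  \<open>2 ^ (-|V|)\<close> cancels in the quotient.\<close>

lemma clause_sat_ext_clause:
  "clause_sat \<sigma> (ext_clause c) \<longleftrightarrow> \<sigma> (Inr c) \<or> clause_sat (\<sigma> \<circ> Inl) c"
  unfolding clause_sat_def ext_clause_def by auto

lemma clause_sat_cong:
  assumes "fst ` c \<subseteq> V" and "\<forall>v\<in>V. X v = Y v"
  shows "clause_sat X c \<longleftrightarrow> clause_sat Y c"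
proof -
  have "X v = Y v" if "(v, b) \<in> c" for v b
    using that assms by force
  then show ?thesis
    unfolding clause_sat_def by auto
qed

definition compatible_values :: "'v clause set \<Rightarrow> ('v \<Rightarrow> bool) \<Rightarrow> ('v + 'v clause) \<Rightarrow> bool set" where
  "compatible_values C Y x =
     (case x of Inl v \<Rightarrow> {Y v} | Inr c \<Rightarrow> (if clause_sat Y c then UNIV else {True}))"

lemma agree_sat_ext_clauses_eq_Pi:
  assumes "cnf_formula V C"
  shows "{\<sigma>. \<forall>v\<in>V. \<sigma> (Inl v) = Y v} \<inter> {\<sigma>. \<forall>c'\<in>ext_clauses C. clause_sat \<sigma> c'}
         = Pi (ext_vars V C) (compatible_values C Y)"
proof (intro set_eqI)
  fix \<sigma>
  have Pi_iff: "\<sigma> \<in> Pi (ext_vars V C) (compatible_values C Y) \<longleftrightarrow>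
      (\<forall>v\<in>V. \<sigma> (Inl v) = Y v) \<and> (\<forall>c\<in>C. \<sigma> (Inr c) \<or> clause_sat Y c)"
    by (auto simp: Pi_def ext_vars_def compatible_values_def)
  have "(\<forall>c'\<in>ext_clauses C. clause_sat \<sigma> c') \<longleftrightarrow> (\<forall>c\<in>C. \<sigma> (Inr c) \<or> clause_sat Y c)"
    if agree: "\<forall>v\<in>V. \<sigma> (Inl v) = Y v"
  proof -
    have "clause_sat (\<sigma> \<circ> Inl) c \<longleftrightarrow> clause_sat Y c" if "c \<in> C" for c
      using that agree assms by (intro clause_sat_cong[of c V]) (auto simp: cnf_formula_def)
    then show ?thesis by (simp add: ext_clauses_def clause_sat_ext_clause)
  qed
  then show "\<sigma> \<in> {\<sigma>. \<forall>v\<in>V. \<sigma> (Inl v) = Y v} \<inter> {\<sigma>. \<forall>c'\<in>ext_clauses C. clause_sat \<sigma> c'}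
      \<longleftrightarrow> \<sigma> \<in> Pi (ext_vars V C) (compatible_values C Y)"
    unfolding Pi_iff by blast
qed

lemma prob_agree_sat_ext_clauses:
  assumes "cnf_formula V C" and "\<theta> \<ge> 0"
  shows "measure_pmf.prob (prod_dist V C \<theta>)
           ({\<sigma>. \<forall>v\<in>V. \<sigma> (Inl v) = Y v} \<inter> {\<sigma>. \<forall>c'\<in>ext_clauses C. clause_sat \<sigma> c'})
         = (1/2) ^ card V * exp (- \<theta> * real (card (unsat_clauses C Y)))"
proof -
  have fin_V: "finite V" and fin_C: "finite C" using assms(1) by (auto simp: cnf_formula_def)
  have exp_bounds: "0 \<le> exp (- \<theta>)" "exp (- \<theta>) \<le> 1" using assms(2) by auto
  define p where "p x = measure_pmf.prob
    (case x of Inl v \<Rightarrow> bernoulli_pmf (1/2) | Inr c \<Rightarrow> bernoulli_pmf (exp (- \<theta>)))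
    (compatible_values C Y x)" for x
  have "measure_pmf.prob (prod_dist V C \<theta>) (Pi (ext_vars V C) (compatible_values C Y))
        = prod p (ext_vars V C)"
    unfolding prod_dist_def p_def using fin_V fin_C
    by (intro measure_Pi_pmf_Pi) (simp add: ext_vars_def)
  also have "\<dots> = prod p (Inl ` V) * prod p (Inr ` C)"
    unfolding ext_vars_def using fin_V fin_C by (intro prod.union_disjoint) auto
  also have "prod p (Inl ` V) = (1/2) ^ card V"
    by (subst prod.reindex) (auto simp: p_def compatible_values_def measure_pmf_single)
  also have "prod p (Inr ` C) = (\<Prod>c\<in>C. if clause_sat Y c then 1 else exp (- \<theta>))"
    by (subst prod.reindex)
       (auto simp: p_def compatible_values_def measure_pmf_single pmf_bernoulli_True[OF exp_bounds]
             intro!: prod.cong)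
  also have "\<dots> = exp (- \<theta>) ^ card (unsat_clauses C Y)"
    using fin_C by (simp add: prod.If_cases unsat_clauses_def Collect_conj_eq Compl_eq)
  also have "\<dots> = exp (- \<theta> * real (card (unsat_clauses C Y)))"
    by (simp add: exp_of_nat_mult[symmetric] mult.commute)
  finally show ?thesis
    by (simp only: agree_sat_ext_clauses_eq_Pi[OF assms(1)])
qed

lemma measure_pmf_prob_sum_fibres:
  assumes "finite S" and "f ` A \<subseteq> S"
  shows "measure_pmf.prob M A = (\<Sum>y\<in>S. measure_pmf.prob M (A \<inter> f -` {y}))"
proof -
  have "A = (\<Union>y\<in>S. A \<inter> f -` {y})"
    using assms(2) by auto
  then have "measure_pmf.prob M A = measure_pmf.prob M (\<Union>y\<in>S. A \<inter> f -` {y})"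
    by (rule arg_cong)
  also have "\<dots> = (\<Sum>y\<in>S. measure_pmf.prob M (A \<inter> f -` {y}))"
    using assms(1) by (intro measure_pmf.finite_measure_finite_Union) (auto simp: disjoint_family_on_def)
  finally show ?thesis .
qed

theorem proposition7p9:
  fixes V :: "'v set" and C :: "'v clause set" and \<theta> :: real and X :: "'v \<Rightarrow> bool"
  assumes "cnf_formula V C" and "\<theta> \<ge> 0"
  defines "Good \<equiv> {\<sigma>. \<forall>c'\<in>ext_clauses C. clause_sat \<sigma> c'}"
      and "Agree \<equiv> {\<sigma>. \<forall>v\<in>V. \<sigma> (Inl v) = X v}"
  shows "measure_pmf.prob (prod_dist V C \<theta>) (Agree \<inter> Good) /
           measure_pmf.prob (prod_dist V C \<theta>) Good = mu_theta V C \<theta> X"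
proof -
  let ?P = "measure_pmf.prob (prod_dist V C \<theta>)"
  let ?S = "V \<rightarrow>\<^sub>E (UNIV :: bool set)"
  let ?w = "\<lambda>Y. exp (- \<theta> * real (card (unsat_clauses C Y)))"
  note prob = prob_agree_sat_ext_clauses[OF assms(1,2), folded Good_def]
  have fin_S: "finite ?S" using assms(1) by (simp add: cnf_formula_def finite_PiE)
  have fibre: "Good \<inter> (\<lambda>\<sigma>. restrict (\<sigma> \<circ> Inl) V) -` {Y} = {\<sigma>. \<forall>v\<in>V. \<sigma> (Inl v) = Y v} \<inter> Good"
    if "Y \<in> ?S" for Y
    using that by (auto simp: fun_eq_iff PiE_def extensional_def)
  have "?P Good = (\<Sum>Y\<in>?S. ?P (Good \<inter> (\<lambda>\<sigma>. restrict (\<sigma> \<circ> Inl) V) -` {Y}))"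
    using fin_S by (intro measure_pmf_prob_sum_fibres) auto
  also have "\<dots> = (1/2) ^ card V * (\<Sum>Y\<in>?S. ?w Y)"
    by (simp add: fibre prob sum_distrib_left)
  finally show ?thesis
    unfolding Agree_def prob mu_theta_def by simp
qed

end
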